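(* Let $\Omega\subset\mathbb{R}^n$ be a domain with $\mathrm{width}(\Omega)<+\infty$, $f\in L^\infty(\Omega)$, $g\in C(\partial\Omega)\cap L^\infty(\partial\Omega)$, $(\varepsilon_i)$ a sequence of positive numbers with $\varepsilon_i\to0$, and for each $i$ let $u_i:\overline\Omega\to\mathbb{R}$ be a bounded solution of $\Delta^{\varepsilon_i}_\infty u_i=\varepsilon_i^2 f$ in $\Omega$, $u_i=g$ on $\partial\Omega$. Let $r>0$. Then there is a constant $C'_r$ depending on $r$, $\|g\|_\infty$ and $\|f\|_\infty$ such that for every $\delta>0$ there exists $N\in\mathbb{N}$ with the property: for all $i>N$ and all $x,y\in\Omega_r$ with $d(x,y)<\delta$, one has $|u_i(x)-u_i(y)|\le C'_r\delta$.
   Context: $d(x,y)$ is the intrinsic metric of $\overline\Omega$ (infimum of lengths of paths in $\overline\Omega$ from $x$ to $y$); $\mathrm{width}(\Omega)=\sup_{x\in\Omega}\inf_{y\in\partial\Omega}d(y,x)$; $\Omega_r=\{x\in\Omega:\ \inf_{y\in\partial\Omega}d(x,y)>r\}$. For $\varepsilon>0$, $B_x(\varepsilon)=\{y\in\overline\Omega: d(x,y)<\varepsilon\}$ and $\Delta^{\varepsilon}_\infty w(x)=\inf_{y\in B_x(\varepsilon)}w(y)+\sup_{y\in B_x(\varepsilon)}w(y)-2w(x)$. *)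

theory Defs
  imports "HOL-Analysis.Analysis"
begin

definition path_len :: "(real \<Rightarrow> 'a::metric_space) \<Rightarrow> ereal" where
  "path_len \<gamma> = (SUP ts \<in> {ts. sorted ts \<and> set ts \<subseteq> {0..1}}.
      ereal (\<Sum>i<length ts - 1. dist (\<gamma> (ts ! i)) (\<gamma> (ts ! Suc i))))"

text \<open>Intrinsic metric of a set S: infimum of lengths of paths in S from x to y
  (value \<infinity> if no such path has finite length).\<close>
definition intrinsic_dist :: "'a::real_normed_vector set \<Rightarrow> 'a \<Rightarrow> 'a \<Rightarrow> ereal" where
  "intrinsic_dist S x y = (INF \<gamma> \<in> {\<gamma>. path \<gamma> \<and> path_image \<gamma> \<subseteq> S \<and>
      pathstart \<gamma> = x \<and> pathfinish \<gamma> = y}. path_len \<gamma>)"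

definition dOm :: "'a::real_normed_vector set \<Rightarrow> 'a \<Rightarrow> 'a \<Rightarrow> ereal" where
  "dOm \<Omega> x y = intrinsic_dist (closure \<Omega>) x y"

definition width :: "'a::real_normed_vector set \<Rightarrow> ereal" where
  "width \<Omega> = (SUP x \<in> \<Omega>. INF y \<in> frontier \<Omega>. dOm \<Omega> y x)"

definition inner_set :: "'a::real_normed_vector set \<Rightarrow> real \<Rightarrow> 'a set" where
  "inner_set \<Omega> r = {x \<in> \<Omega>. (INF y \<in> frontier \<Omega>. dOm \<Omega> x y) > ereal r}"

definition iball :: "'a::real_normed_vector set \<Rightarrow> 'a \<Rightarrow> real \<Rightarrow> 'a set" where
  "iball \<Omega> x \<epsilon> = {y \<in> closure \<Omega>. dOm \<Omega> x y < ereal \<epsilon>}"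

definition eps_inf_lap :: "'a::real_normed_vector set \<Rightarrow> real \<Rightarrow> ('a \<Rightarrow> real) \<Rightarrow> 'a \<Rightarrow> real" where
  "eps_inf_lap \<Omega> \<epsilon> w x =
     (INF y \<in> iball \<Omega> x \<epsilon>. w y) + (SUP y \<in> iball \<Omega> x \<epsilon>. w y) - 2 * w x"

end

theory Submission
  imports Defs
begin

text \<open>Write \<open>G\<close>, \<open>F\<close> for the sup norms of \<open>g\<close>, \<open>f\<close> and \<open>W\<close> for the width. First, every solution
  satisfies \<open>|u| \<le> G + 2 (F + 1) ((W + 2)\<^sup>2 + 4 (W + 2) + 1)\<close>: with \<open>h t = 2 Q t - t\<^sup>2\<close>, \<open>Q = W + 2\<close>,
  the function \<open>G + 2 (F + 1) h (dist x \<partial>\<Omega>)\<close> (plus a jump at the frontier) is a strict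
  supersolution by concavity of \<open>h\<close>, and a discrete comparison principle applies to \<open>u\<close> and \<open>-u\<close>.
  Second, if the ball of radius \<open>R\<close> around \<open>z\<close> lies in \<open>\<Omega>\<close>, then \<open>u\<close> exceeds \<open>u z\<close> by at most
  \<open>O(\<epsilon>)\<close> on the intrinsic \<open>\<epsilon>\<close>-ball of \<open>z\<close>: along a chain of about \<open>R / \<epsilon>\<close> points, each almost
  maximising \<open>u\<close> on the \<open>\<epsilon>\<close>-ball of its predecessor, the increments decrease by at most
  \<open>\<epsilon>\<^sup>2 (F + 1)\<close> per step, while their sum is bounded by the oscillation of \<open>u\<close>. Applied to \<open>u\<close> and
  \<open>-u\<close>, this gives \<open>|u w - u z| \<le> C \<epsilon>\<close> whenever \<open>|w - z| < \<epsilon>\<close>. For \<open>x, y \<in> \<Omega>\<^sub>r\<close> with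
  \<open>d(x, y) < \<delta> < r / 4\<close> the segment from \<open>x\<close> to \<open>y\<close> stays at distance \<open>r / 2\<close> from the frontier,
  and summing over \<open>|x - y| / \<epsilon> + 1\<close> steps of length below \<open>\<epsilon>\<close> yields
  \<open>|u x - u y| \<le> C (|x - y| + \<epsilon>) \<le> 2 C \<delta>\<close> as soon as \<open>\<epsilon> < \<delta>\<close>.\<close>

section \<open>Intrinsic distance and intrinsic balls\<close>

lemma path_len_ge_dist: "ereal (dist (\<gamma> 0) (\<gamma> 1)) \<le> path_len \<gamma>"
proof -
  have "[0, 1] \<in> {ts. sorted ts \<and> set ts \<subseteq> {0..1::real}}" by auto
  then have "ereal (\<Sum>i<length [0, 1::real] - 1. dist (\<gamma> ([0, 1] ! i)) (\<gamma> ([0, 1] ! Suc i)))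
      \<le> path_len \<gamma>"
    unfolding path_len_def by (rule SUP_upper)
  then show ?thesis by simp
qed

lemma path_len_linepath_le: "path_len (linepath p q) \<le> ereal (dist p q)"
  unfolding path_len_def
proof (rule SUP_least)
  fix ts :: "real list"
  assume "ts \<in> {ts. sorted ts \<and> set ts \<subseteq> {0..1}}"
  then have sorted: "sorted ts" and sub: "set ts \<subseteq> {0..1}" by auto
  have dist_linepath: "dist (linepath p q a) (linepath p q b) = \<bar>b - a\<bar> * dist p q" for a b
  proof -
    have "linepath p q b - linepath p q a = (b - a) *\<^sub>R (q - p)"
      by (simp add: linepath_def algebra_simps)
    then show ?thesis
      by (simp add: dist_norm norm_minus_commute[of "linepath p q a"] norm_minus_commute[of q])
  qed
  show "ereal (\<Sum>i<length ts - 1. dist (linepath p q (ts ! i)) (linepath p q (ts ! Suc i)))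
      \<le> ereal (dist p q)"
  proof (cases "length ts")
    case (Suc n)
    have "(\<Sum>i<length ts - 1. dist (linepath p q (ts ! i)) (linepath p q (ts ! Suc i)))
        = (\<Sum>i<n. (ts ! Suc i - ts ! i) * dist p q)"
      using Suc sorted by (intro sum.cong) (auto simp: dist_linepath sorted_nth_mono)
    also have "\<dots> = (ts ! n - ts ! 0) * dist p q"
      by (simp add: sum_distrib_right[symmetric] sum_lessThan_telescope)
    also have "\<dots> \<le> 1 * dist p q"
    proof (rule mult_right_mono)
      have "ts ! n \<in> set ts" "ts ! 0 \<in> set ts" using Suc by auto
      then have "ts ! n \<le> 1" "0 \<le> ts ! 0" using sub by auto
      then show "ts ! n - ts ! 0 \<le> 1" by linarith
    qed simp
    finally show ?thesis by simp
  qed simp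
qed

lemma dist_le_dOm: "ereal (dist x y) \<le> dOm \<Omega> x y"
  unfolding dOm_def intrinsic_dist_def
  by (rule INF_greatest) (use path_len_ge_dist in \<open>auto simp: pathstart_def pathfinish_def\<close>)

lemma dOm_le_dist_if_segment: "closed_segment x y \<subseteq> closure \<Omega> \<Longrightarrow> dOm \<Omega> x y \<le> ereal (dist x y)"
  unfolding dOm_def intrinsic_dist_def
  by (rule INF_lower2[of "linepath x y"]) (auto intro: path_len_linepath_le)

lemma iball_subset_closure: "iball \<Omega> x e \<subseteq> closure \<Omega>"
  by (auto simp: iball_def)

lemma dist_less_if_mem_iball: "y \<in> iball \<Omega> x e \<Longrightarrow> dist x y < e"
  unfolding iball_def using dist_le_dOm[of x y \<Omega>] by (auto dest: order.strict_trans1)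

lemma mem_iballI: "closed_segment x y \<subseteq> closure \<Omega> \<Longrightarrow> dist x y < e \<Longrightarrow> y \<in> iball \<Omega> x e"
  unfolding iball_def using dOm_le_dist_if_segment[of x y \<Omega>] by (auto intro: le_less_trans)

lemma ball_subset_iball: "ball x e \<subseteq> \<Omega> \<Longrightarrow> ball x e \<subseteq> iball \<Omega> x e"
proof
  fix y assume sub: "ball x e \<subseteq> \<Omega>" and y: "y \<in> ball x e"
  then have "closed_segment x y \<subseteq> ball x e"
    by (intro closed_segment_subset) (auto intro: le_less_trans[OF zero_le_dist])
  then have "closed_segment x y \<subseteq> closure \<Omega>" using sub closure_subset by blast
  with y show "y \<in> iball \<Omega> x e" by (intro mem_iballI) auto
qed

lemma centre_mem_iball: "x \<in> closure \<Omega> \<Longrightarrow> 0 < e \<Longrightarrow> x \<in> iball \<Omega> x e"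
  by (rule mem_iballI) auto

lemma bounded_image_iball: "bounded (u ` closure \<Omega>) \<Longrightarrow> bounded (u ` iball \<Omega> x e)"
  by (rule bounded_subset) (auto simp: iball_def)

section \<open>Distance to the frontier\<close>

lemma nearest_frontier_point:
  fixes \<Omega> :: "'a::euclidean_space set"
  assumes "open \<Omega>" "frontier \<Omega> \<noteq> {}" "x \<in> \<Omega>"
  obtains y where "y \<in> frontier \<Omega>" "dist x y = infdist x (frontier \<Omega>)"
    "0 < infdist x (frontier \<Omega>)" "ball x (infdist x (frontier \<Omega>)) \<subseteq> \<Omega>"
    "closed_segment x y \<subseteq> closure \<Omega>"
proof -
  let ?\<rho> = "infdist x (frontier \<Omega>)"
  obtain y where y: "y \<in> frontier \<Omega>" "dist x y = ?\<rho>"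
    using infdist_attains_inf[OF frontier_closed assms(2)] by metis
  have "x \<notin> frontier \<Omega>" using assms(1,3) by (simp add: frontier_def interior_open)
  then have pos: "0 < ?\<rho>" by (rule infdist_pos_not_in_closed[OF frontier_closed assms(2)])
  have ball: "ball x ?\<rho> \<subseteq> \<Omega>"
  proof (rule ccontr)
    assume "\<not> ball x ?\<rho> \<subseteq> \<Omega>"
    then have "ball x ?\<rho> - \<Omega> \<noteq> {}" by blast
    moreover have "x \<in> ball x ?\<rho> \<inter> \<Omega>" using pos assms(3) by simp
    ultimately have "ball x ?\<rho> \<inter> frontier \<Omega> \<noteq> {}"
      by (intro connected_Int_frontier) blast+
    then obtain w where "w \<in> frontier \<Omega>" "dist x w < ?\<rho>" by auto
    then show False using infdist_le[of w "frontier \<Omega>" x] by linarith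
  qed
  have "closed_segment x y \<subseteq> cball x ?\<rho>"
    using y(2) pos by (intro closed_segment_subset) auto
  also have "\<dots> = closure (ball x ?\<rho>)" using pos by simp
  also have "\<dots> \<subseteq> closure \<Omega>" using ball by (rule closure_mono)
  finally show ?thesis using that y pos ball by blast
qed

lemma point_towards_frontier:
  fixes \<Omega> :: "'a::euclidean_space set"
  assumes "open \<Omega>" "frontier \<Omega> \<noteq> {}" "x \<in> \<Omega>"
    and "0 \<le> s" "s \<le> infdist x (frontier \<Omega>)"
  obtains z where "dist x z = s" "closed_segment x z \<subseteq> closure \<Omega>"
    "infdist z (frontier \<Omega>) \<le> infdist x (frontier \<Omega>) - s"
proof -
  let ?\<rho> = "infdist x (frontier \<Omega>)"
  obtain y where y: "y \<in> frontier \<Omega>" "dist x y = ?\<rho>" "0 < ?\<rho>" "closed_segment x y \<subseteq> closure \<Omega>"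
    using nearest_frontier_point[OF assms(1-3)] by blast
  define z where "z = x + (s / ?\<rho>) *\<^sub>R (y - x)"
  have "dist x z = s"
    using y(2,3) assms(4) by (simp add: z_def dist_norm norm_minus_commute[of x y])
  moreover have "y - z = (1 - s / ?\<rho>) *\<^sub>R (y - x)"
    by (simp add: z_def algebra_simps)
  then have "dist z y = (1 - s / ?\<rho>) * ?\<rho>"
    using y(2,3) assms(5) by (simp add: dist_norm norm_minus_commute[of z y] norm_minus_commute[of y x])
  then have "infdist z (frontier \<Omega>) \<le> ?\<rho> - s"
    using infdist_le[OF y(1), of z] y(3) by (simp add: algebra_simps)
  moreover have "z \<in> closed_segment x y"
    unfolding z_def in_segment using assms(4,5) y(3)
    by (intro exI[of _ "s / ?\<rho>"]) (auto simp: algebra_simps)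
  then have "closed_segment x z \<subseteq> closure \<Omega>"
    using y(4) subset_closed_segment[of x z x y] by auto
  ultimately show ?thesis using that by blast
qed

lemma ball_subset_if_mem_inner_set:
  fixes \<Omega> :: "'a::euclidean_space set"
  assumes "open \<Omega>" "frontier \<Omega> \<noteq> {}" "x \<in> inner_set \<Omega> r"
  shows "ball x r \<subseteq> \<Omega>"
proof -
  let ?\<rho> = "infdist x (frontier \<Omega>)"
  have x: "x \<in> \<Omega>" and deep: "ereal r < (INF y \<in> frontier \<Omega>. dOm \<Omega> x y)"
    using assms(3) unfolding inner_set_def by auto
  obtain y where y: "y \<in> frontier \<Omega>" "dist x y = ?\<rho>" "ball x ?\<rho> \<subseteq> \<Omega>"
    "closed_segment x y \<subseteq> closure \<Omega>"
    using nearest_frontier_point[OF assms(1,2) x] by blast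
  have "(INF y \<in> frontier \<Omega>. dOm \<Omega> x y) \<le> ereal ?\<rho>"
    using dOm_le_dist_if_segment[OF y(4)] y(1,2) by (metis INF_lower2)
  with deep have "ereal r < ereal ?\<rho>" by (rule less_le_trans)
  then have "r < ?\<rho>" by simp
  then show ?thesis using y(3) by (meson less_imp_le order_trans subset_ball)
qed

lemma infdist_frontier_le_width: "x \<in> \<Omega> \<Longrightarrow> ereal (infdist x (frontier \<Omega>)) \<le> width \<Omega>"
  unfolding width_def
proof (rule SUP_upper2, assumption, rule INF_greatest)
  fix y assume "y \<in> frontier \<Omega>"
  then have "infdist x (frontier \<Omega>) \<le> dist y x" by (simp add: infdist_le dist_commute)
  then show "ereal (infdist x (frontier \<Omega>)) \<le> dOm \<Omega> y x"
    using dist_le_dOm[of y x \<Omega>] by (meson ereal_less_eq(3) order_trans)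
qed

lemma frontier_nonempty_if_width_finite:
  assumes "width \<Omega> < \<infinity>" "\<Omega> \<noteq> {}"
  shows "frontier \<Omega> \<noteq> {}"
proof
  assume "frontier \<Omega> = {}"
  with assms(2) have "width \<Omega> = \<infinity>" by (simp add: width_def top_ereal_def)
  with assms(1) show False by simp
qed

lemma infdist_frontier_bounded_if_width_finite:
  assumes "width \<Omega> < \<infinity>"
  obtains W where "0 \<le> W" "\<forall>x\<in>\<Omega>. infdist x (frontier \<Omega>) \<le> W"
proof
  show "0 \<le> max 0 (real_of_ereal (width \<Omega>))" by simp
  show "\<forall>x\<in>\<Omega>. infdist x (frontier \<Omega>) \<le> max 0 (real_of_ereal (width \<Omega>))"
  proof
    fix x assume "x \<in> \<Omega>"
    then have "ereal (infdist x (frontier \<Omega>)) \<le> width \<Omega>" by (rule infdist_frontier_le_width)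
    with assms show "infdist x (frontier \<Omega>) \<le> max 0 (real_of_ereal (width \<Omega>))"
      by (cases "width \<Omega>") auto
  qed
qed

section \<open>The discrete infinity Laplacian\<close>

lemma eps_inf_lap_uminus: "eps_inf_lap \<Omega> e (\<lambda>y. - u y) x = - eps_inf_lap \<Omega> e u x"
  by (simp add: eps_inf_lap_def Inf_real_def image_image)

lemma eps_inf_lap_ge_if_abs_le:
  assumes "\<forall>x\<in>\<Omega>. eps_inf_lap \<Omega> e u x = e\<^sup>2 * f x" and "\<forall>x\<in>\<Omega>. \<bar>f x\<bar> \<le> F"
  shows "\<forall>x\<in>\<Omega>. - (e\<^sup>2 * F) \<le> eps_inf_lap \<Omega> e u x"
proof
  fix x assume "x \<in> \<Omega>"
  then have "e\<^sup>2 * - F \<le> e\<^sup>2 * f x" using assms(2) by (intro mult_left_mono) (auto simp: abs_le_iff)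
  with assms(1) \<open>x \<in> \<Omega>\<close> show "- (e\<^sup>2 * F) \<le> eps_inf_lap \<Omega> e u x" by simp
qed

lemma eps_inf_lap_le_shift:
  fixes u v :: "'a::real_normed_vector \<Rightarrow> real"
  assumes "0 < e" "x \<in> closure \<Omega>" "bounded (u ` closure \<Omega>)" "bounded (v ` closure \<Omega>)"
    and le: "\<forall>y\<in>iball \<Omega> x e. u y \<le> v y + m"
  shows "eps_inf_lap \<Omega> e u x + 2 * u x \<le> eps_inf_lap \<Omega> e v x + 2 * v x + 2 * m"
proof -
  define B where "B = iball \<Omega> x e"
  have "B \<noteq> {}" using centre_mem_iball[OF assms(2,1)] by (auto simp: B_def)
  have bdd_u: "bdd_below (u ` B)" and bdd_v: "bdd_above (v ` B)"
    using bounded_image_iball[OF assms(3)] bounded_image_iball[OF assms(4)]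
    by (auto simp: B_def bounded_imp_bdd_below bounded_imp_bdd_above)
  have "(SUP y\<in>B. u y) \<le> (SUP y\<in>B. v y) + m"
    using \<open>B \<noteq> {}\<close> le cSUP_upper[OF _ bdd_v] by (force simp: B_def intro!: cSUP_least)
  moreover have "(INF y\<in>B. u y) - m \<le> (INF y\<in>B. v y)"
    using \<open>B \<noteq> {}\<close> le cINF_lower[OF bdd_u] by (force simp: B_def intro!: cINF_greatest)
  ultimately show ?thesis by (simp add: eps_inf_lap_def B_def)
qed

lemma eps_inf_lap_comparison:
  fixes u v :: "'a::real_normed_vector \<Rightarrow> real"
  assumes "0 < e" "0 < d"
    and bounded: "bounded (u ` closure \<Omega>)" "bounded (v ` closure \<Omega>)"
    and lap: "\<forall>x\<in>\<Omega>. eps_inf_lap \<Omega> e v x + d \<le> eps_inf_lap \<Omega> e u x"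
    and frontier: "\<forall>x\<in>frontier \<Omega>. u x \<le> v x"
  shows "\<forall>x\<in>closure \<Omega>. u x \<le> v x"
proof (rule ccontr)
  assume "\<not> ?thesis"
  then obtain x0 where x0: "x0 \<in> closure \<Omega>" "v x0 < u x0" by auto
  have "bounded ((\<lambda>x. u x - v x) ` closure \<Omega>)"
    using bounded_minus_comp[OF bounded] .
  then have bdd: "bdd_above ((\<lambda>x. u x - v x) ` closure \<Omega>)" by (rule bounded_imp_bdd_above)
  define m where "m = (SUP x\<in>closure \<Omega>. u x - v x)"
  have le_m: "u y \<le> v y + m" if "y \<in> closure \<Omega>" for y
    using cSUP_upper[OF that bdd] by (simp add: m_def)
  have "0 < m" using le_m[OF x0(1)] x0(2) by linarith
  define \<theta> where "\<theta> = min (m / 2) (d / 4)"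
  have "\<theta> \<le> d / 4" by (simp add: \<theta>_def)
  have "m - \<theta> < m" using \<open>0 < m\<close> \<open>0 < d\<close> by (simp add: \<theta>_def)
  moreover have "closure \<Omega> \<noteq> {}" using x0(1) by auto
  ultimately obtain x where x: "x \<in> closure \<Omega>" "m - \<theta> < u x - v x"
    using less_cSUP_iff[OF _ bdd] unfolding m_def by blast
  have "x \<in> \<Omega>"
  proof (rule ccontr)
    assume "x \<notin> \<Omega>"
    then have "x \<in> frontier \<Omega>" using x(1) closure_Un_frontier by blast
    then show False using frontier x(2) \<open>0 < m\<close> by (force simp: \<theta>_def)
  qed
  have "\<forall>y\<in>iball \<Omega> x e. u y \<le> v y + m"
    using le_m iball_subset_closure by blast
  then have "eps_inf_lap \<Omega> e u x + 2 * u x \<le> eps_inf_lap \<Omega> e v x + 2 * v x + 2 * m"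
    by (rule eps_inf_lap_le_shift[OF \<open>0 < e\<close> x(1) bounded])
  then have "eps_inf_lap \<Omega> e u x \<le> eps_inf_lap \<Omega> e v x + 2 * m - 2 * u x + 2 * v x"
    by linarith
  also have "\<dots> < eps_inf_lap \<Omega> e v x + d"
    using x(2) \<open>0 < d\<close> \<open>\<theta> \<le> d / 4\<close> by linarith
  finally show False using lap \<open>x \<in> \<Omega>\<close> by fastforce
qed

section \<open>A barrier built from the distance to the frontier\<close>

definition barrier_profile :: "real \<Rightarrow> real \<Rightarrow> real" where
  "barrier_profile Q t = 2 * Q * t - t\<^sup>2"

text \<open>The drop of the barrier at the frontier makes it a strict supersolution also within distance
  \<open>e\<close> of the frontier, where the concavity of the profile alone does not suffice.\<close>
definition frontier_barrier :: "'a::real_normed_vector set \<Rightarrow> real \<Rightarrow> real \<Rightarrow> 'a \<Rightarrow> real" where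
  "frontier_barrier \<Omega> Q e x = (if x \<in> \<Omega>
     then barrier_profile Q (infdist x (frontier \<Omega>)) + barrier_profile Q (2 * e) + e\<^sup>2 / 2 else 0)"

lemma barrier_profile_mono: "0 \<le> s \<Longrightarrow> s \<le> t \<Longrightarrow> t \<le> Q \<Longrightarrow> barrier_profile Q s \<le> barrier_profile Q t"
proof -
  assume "0 \<le> s" "s \<le> t" "t \<le> Q"
  then have "0 \<le> (t - s) * (2 * Q - t - s)" by simp
  also have "\<dots> = barrier_profile Q t - barrier_profile Q s"
    by (simp add: barrier_profile_def power2_eq_square algebra_simps)
  finally show ?thesis by simp
qed

lemma barrier_profile_nonneg: "0 \<le> t \<Longrightarrow> t \<le> 2 * Q \<Longrightarrow> 0 \<le> barrier_profile Q t"
proof -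
  assume "0 \<le> t" "t \<le> 2 * Q"
  then have "0 \<le> t * (2 * Q - t)" by simp
  then show ?thesis by (simp add: barrier_profile_def power2_eq_square algebra_simps)
qed

lemma barrier_profile_le: "barrier_profile Q t \<le> Q\<^sup>2"
proof -
  have "Q\<^sup>2 - barrier_profile Q t = (Q - t)\<^sup>2"
    by (simp add: barrier_profile_def power2_eq_square algebra_simps)
  then show ?thesis by (metis diff_ge_0_iff_ge zero_le_power2)
qed

lemma barrier_profile_second_difference:
  assumes "0 < Q" "0 \<le> \<rho>" "0 \<le> e"
  shows "barrier_profile Q (\<rho> - (e - e\<^sup>2 / (4 * Q))) + barrier_profile Q (\<rho> + e)
    - 2 * barrier_profile Q \<rho> \<le> - e\<^sup>2 / 2"
proof -
  define \<tau> where "\<tau> = e\<^sup>2 / (4 * Q)"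
  have "barrier_profile Q (\<rho> - (e - \<tau>)) + barrier_profile Q (\<rho> + e) - 2 * barrier_profile Q \<rho>
      = 2 * Q * \<tau> - 2 * \<rho> * \<tau> - (e - \<tau>)\<^sup>2 - e\<^sup>2"
    by (simp add: barrier_profile_def power2_eq_square algebra_simps)
  moreover have "2 * Q * \<tau> = e\<^sup>2 / 2" using assms(1) by (simp add: \<tau>_def)
  moreover have "0 \<le> 2 * \<rho> * \<tau>" using assms by (simp add: \<tau>_def)
  moreover have "0 \<le> (e - \<tau>)\<^sup>2" by simp
  ultimately show ?thesis unfolding \<tau>_def by linarith
qed

lemma frontier_barrier_bounds:
  assumes "0 \<le> e" "e \<le> 1" "2 \<le> Q" and depth: "\<forall>x\<in>\<Omega>. infdist x (frontier \<Omega>) + 1 \<le> Q"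
  shows "0 \<le> frontier_barrier \<Omega> Q e x" "frontier_barrier \<Omega> Q e x \<le> Q\<^sup>2 + 4 * Q + 1"
proof -
  have "0 \<le> barrier_profile Q (2 * e)" using assms(1-3) by (intro barrier_profile_nonneg) auto
  moreover have "0 \<le> barrier_profile Q (infdist x (frontier \<Omega>))" if "x \<in> \<Omega>"
    using depth that assms(3) by (intro barrier_profile_nonneg infdist_nonneg) force
  ultimately show "0 \<le> frontier_barrier \<Omega> Q e x" by (simp add: frontier_barrier_def)
  have "barrier_profile Q (2 * e) = 4 * Q * e - 4 * e\<^sup>2"
    by (simp add: barrier_profile_def power2_eq_square)
  also have "\<dots> \<le> 4 * Q"
    using mult_left_le[of e Q] assms(1-3) zero_le_power2[of e] by linarith
  finally have "barrier_profile Q (2 * e) \<le> 4 * Q" .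
  moreover have "e\<^sup>2 / 2 \<le> 1" using power_le_one[OF assms(1,2), of 2] by simp
  ultimately show "frontier_barrier \<Omega> Q e x \<le> Q\<^sup>2 + 4 * Q + 1"
    using barrier_profile_le[of Q] assms(3) by (auto simp: frontier_barrier_def add_mono)
qed

lemma frontier_barrier_le_on_iball:
  assumes "0 \<le> e" "e \<le> 1" "2 \<le> Q" and depth: "\<forall>x\<in>\<Omega>. infdist x (frontier \<Omega>) + 1 \<le> Q"
    and "x \<in> \<Omega>" "y \<in> iball \<Omega> x e"
  shows "frontier_barrier \<Omega> Q e y
    \<le> barrier_profile Q (infdist x (frontier \<Omega>) + e) + barrier_profile Q (2 * e) + e\<^sup>2 / 2"
proof (cases "y \<in> \<Omega>")
  case True
  have "infdist y (frontier \<Omega>) \<le> infdist x (frontier \<Omega>) + e"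
    using infdist_triangle[of y "frontier \<Omega>" x] dist_less_if_mem_iball[OF assms(6)]
    by (simp add: dist_commute)
  then have "barrier_profile Q (infdist y (frontier \<Omega>))
      \<le> barrier_profile Q (infdist x (frontier \<Omega>) + e)"
    using depth assms(2,5) by (intro barrier_profile_mono infdist_nonneg) force+
  with True show ?thesis by (simp add: frontier_barrier_def)
next
  case False
  have "0 \<le> barrier_profile Q (infdist x (frontier \<Omega>) + e)"
    using depth assms(1-3,5) by (intro barrier_profile_nonneg add_nonneg_nonneg infdist_nonneg) force+
  moreover have "0 \<le> barrier_profile Q (2 * e)" using assms(1-3) by (intro barrier_profile_nonneg) auto
  ultimately show ?thesis using False by (simp add: frontier_barrier_def)
qed

lemma frontier_barrier_descent:
  fixes \<Omega> :: "'a::euclidean_space set"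
  assumes "open \<Omega>" "frontier \<Omega> \<noteq> {}" "0 < e" "e \<le> 1" "2 \<le> Q"
    and depth: "\<forall>x\<in>\<Omega>. infdist x (frontier \<Omega>) + 1 \<le> Q" and "x \<in> \<Omega>"
  shows "\<exists>z\<in>iball \<Omega> x e. frontier_barrier \<Omega> Q e z
    + (barrier_profile Q (infdist x (frontier \<Omega>) + e) + barrier_profile Q (2 * e) + e\<^sup>2 / 2)
    - 2 * frontier_barrier \<Omega> Q e x \<le> - e\<^sup>2 / 2"
proof -
  define \<rho> where "\<rho> = infdist x (frontier \<Omega>)"
  define b where "b = barrier_profile Q (2 * e) + e\<^sup>2 / 2"
  have \<rho>: "0 < \<rho>" "ball x \<rho> \<subseteq> \<Omega>" "\<rho> + 1 \<le> Q"
    using nearest_frontier_point[OF assms(1,2,7)] depth assms(7) unfolding \<rho>_def by auto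
  have x: "frontier_barrier \<Omega> Q e x = barrier_profile Q \<rho> + b"
    using assms(7) by (simp add: frontier_barrier_def \<rho>_def b_def)
  \<comment> \<open>Near the frontier take the nearest frontier point, where the barrier drops; otherwise move
    almost \<open>e\<close> towards it and gain from the concavity of the profile.\<close>
  obtain z where z: "z \<in> iball \<Omega> x e"
    "frontier_barrier \<Omega> Q e z + barrier_profile Q (\<rho> + e) - 2 * barrier_profile Q \<rho> - b \<le> - e\<^sup>2 / 2"
  proof (cases "\<rho> < e")
    case True
    obtain z where z: "z \<in> frontier \<Omega>" "dist x z = \<rho>" "closed_segment x z \<subseteq> closure \<Omega>"
      using nearest_frontier_point[OF assms(1,2,7)] unfolding \<rho>_def by blast
    then have "frontier_barrier \<Omega> Q e z = 0"
      using assms(1) by (simp add: frontier_barrier_def frontier_def interior_open)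
    moreover have "barrier_profile Q (\<rho> + e) \<le> barrier_profile Q (2 * e)"
      using True \<rho> assms(3-5) by (intro barrier_profile_mono) auto
    moreover have "0 \<le> barrier_profile Q \<rho>"
      using \<rho> by (intro barrier_profile_nonneg) auto
    moreover have "z \<in> iball \<Omega> x e" using z True by (intro mem_iballI) auto
    ultimately show ?thesis using that b_def by fastforce
  next
    case False
    define s where "s = e - e\<^sup>2 / (4 * Q)"
    have "e\<^sup>2 / (4 * Q) < e"
      using assms(3-5) by (simp add: field_simps power2_eq_square mult_strict_right_mono)
    then have s: "0 < s" "s < e" using assms(3,5) by (auto simp: s_def)
    obtain z where z: "dist x z = s" "closed_segment x z \<subseteq> closure \<Omega>"
      "infdist z (frontier \<Omega>) \<le> \<rho> - s"
      using point_towards_frontier[OF assms(1,2,7), of s] s False by (auto simp: \<rho>_def)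
    have "z \<in> \<Omega>" using \<rho>(2) z(1) s False by auto
    have "frontier_barrier \<Omega> Q e z \<le> barrier_profile Q (\<rho> - s) + b"
      using \<open>z \<in> \<Omega>\<close> z(3) \<rho>(3) s by (auto simp: frontier_barrier_def b_def
        intro!: barrier_profile_mono infdist_nonneg)
    moreover have "barrier_profile Q (\<rho> - s) + barrier_profile Q (\<rho> + e) - 2 * barrier_profile Q \<rho>
        \<le> - e\<^sup>2 / 2"
      unfolding s_def using \<rho>(1) assms(3,5) by (intro barrier_profile_second_difference) auto
    moreover have "z \<in> iball \<Omega> x e" using z s by (intro mem_iballI) auto
    ultimately show ?thesis using that by fastforce
  qed
  have "frontier_barrier \<Omega> Q e z + (barrier_profile Q (\<rho> + e) + barrier_profile Q (2 * e) + e\<^sup>2 / 2)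
      - 2 * frontier_barrier \<Omega> Q e x \<le> - e\<^sup>2 / 2"
    using z(2) x b_def by linarith
  with z(1) show ?thesis unfolding \<rho>_def by blast
qed

lemma eps_inf_lap_frontier_barrier:
  fixes \<Omega> :: "'a::euclidean_space set"
  assumes "open \<Omega>" "frontier \<Omega> \<noteq> {}" "0 < e" "e \<le> 1" "2 \<le> Q"
    and depth: "\<forall>x\<in>\<Omega>. infdist x (frontier \<Omega>) + 1 \<le> Q" and "0 \<le> A" "x \<in> \<Omega>"
  shows "eps_inf_lap \<Omega> e (\<lambda>y. G + A * frontier_barrier \<Omega> Q e y) x \<le> - A * e\<^sup>2 / 2"
proof -
  define v where "v = (\<lambda>y. G + A * frontier_barrier \<Omega> Q e y)"
  define hi where
    "hi = barrier_profile Q (infdist x (frontier \<Omega>) + e) + barrier_profile Q (2 * e) + e\<^sup>2 / 2"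
  define B where "B = iball \<Omega> x e"
  obtain z where z: "z \<in> B" "frontier_barrier \<Omega> Q e z + hi - 2 * frontier_barrier \<Omega> Q e x \<le> - e\<^sup>2 / 2"
    using frontier_barrier_descent[OF assms(1-6,8)] unfolding B_def hi_def by blast
  have "B \<noteq> {}" using z(1) by blast
  have "(SUP y\<in>B. v y) \<le> G + A * hi"
    using \<open>B \<noteq> {}\<close> frontier_barrier_le_on_iball[OF _ assms(4,5) depth assms(8)] assms(3,7)
    by (auto simp: v_def hi_def B_def intro!: cSUP_least mult_left_mono)
  moreover have "bdd_below (v ` B)"
    using frontier_barrier_bounds(1)[OF _ assms(4,5) depth] assms(3,7)
    by (auto simp: v_def intro!: bdd_belowI[of _ G])
  then have "(INF y\<in>B. v y) \<le> v z" using z(1) by (rule cINF_lower)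
  ultimately have "eps_inf_lap \<Omega> e v x \<le> v z + (G + A * hi) - 2 * v x"
    by (simp add: eps_inf_lap_def B_def)
  also have "\<dots> = A * (frontier_barrier \<Omega> Q e z + hi - 2 * frontier_barrier \<Omega> Q e x)"
    by (simp add: v_def algebra_simps)
  also have "\<dots> \<le> A * (- e\<^sup>2 / 2)" using z(2) assms(7) by (rule mult_left_mono)
  finally show ?thesis by (simp add: v_def)
qed

section \<open>Uniform bound for solutions\<close>

lemma upper_bound_of_eps_subsolution:
  fixes \<Omega> :: "'a::euclidean_space set" and u :: "'a \<Rightarrow> real"
  assumes "open \<Omega>" "frontier \<Omega> \<noteq> {}" "0 < e" "e \<le> 1" "0 \<le> W" "0 \<le> F"
    and width: "\<forall>x\<in>\<Omega>. infdist x (frontier \<Omega>) \<le> W"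
    and bounded: "bounded (u ` closure \<Omega>)"
    and lap: "\<forall>x\<in>\<Omega>. - (e\<^sup>2 * F) \<le> eps_inf_lap \<Omega> e u x"
    and frontier: "\<forall>x\<in>frontier \<Omega>. u x \<le> G"
  shows "\<forall>x\<in>closure \<Omega>. u x \<le> G + 2 * (F + 1) * ((W + 2)\<^sup>2 + 4 * (W + 2) + 1)"
proof -
  define Q where "Q = W + 2"
  define A where "A = 2 * (F + 1)"
  define v where "v = (\<lambda>y. G + A * frontier_barrier \<Omega> Q e y)"
  have Q: "2 \<le> Q" "\<forall>x\<in>\<Omega>. infdist x (frontier \<Omega>) + 1 \<le> Q"
    using assms(5) width by (auto simp: Q_def)
  have "0 \<le> A" using assms(6) by (simp add: A_def)
  have v_bounds: "G \<le> v y" "v y \<le> G + A * (Q\<^sup>2 + 4 * Q + 1)" for y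
    using frontier_barrier_bounds[of e Q \<Omega> y] Q assms(3,4) \<open>0 \<le> A\<close>
    by (auto simp: v_def mult_left_mono)
  have "\<forall>x\<in>closure \<Omega>. u x \<le> v x"
  proof (rule eps_inf_lap_comparison[of e "e\<^sup>2"])
    show "bounded (v ` closure \<Omega>)"
    proof (rule bounded_subset)
      show "v ` closure \<Omega> \<subseteq> {G .. G + A * (Q\<^sup>2 + 4 * Q + 1)}" using v_bounds by auto
    qed simp
    show "\<forall>x\<in>\<Omega>. eps_inf_lap \<Omega> e v x + e\<^sup>2 \<le> eps_inf_lap \<Omega> e u x"
    proof
      fix x assume "x \<in> \<Omega>"
      then have "eps_inf_lap \<Omega> e v x \<le> - A * e\<^sup>2 / 2"
        unfolding v_def using eps_inf_lap_frontier_barrier[OF assms(1-4) Q \<open>0 \<le> A\<close>] by blast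
      then show "eps_inf_lap \<Omega> e v x + e\<^sup>2 \<le> eps_inf_lap \<Omega> e u x"
        using lap \<open>x \<in> \<Omega>\<close> by (auto simp: A_def algebra_simps)
    qed
    show "\<forall>x\<in>frontier \<Omega>. u x \<le> v x"
      using frontier assms(1) by (simp add: v_def frontier_barrier_def frontier_def interior_open)
  qed (use assms(3) bounded in auto)
  then show ?thesis
    using v_bounds(2) unfolding A_def Q_def by (meson order_trans)
qed

lemma abs_bound_of_eps_solution:
  fixes \<Omega> :: "'a::euclidean_space set" and u :: "'a \<Rightarrow> real"
  assumes "open \<Omega>" "frontier \<Omega> \<noteq> {}" "0 < e" "e \<le> 1" "0 \<le> W" "0 \<le> F"
    and width: "\<forall>x\<in>\<Omega>. infdist x (frontier \<Omega>) \<le> W"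
    and bounded: "bounded (u ` closure \<Omega>)"
    and eq: "\<forall>x\<in>\<Omega>. eps_inf_lap \<Omega> e u x = e\<^sup>2 * f x" and f: "\<forall>x\<in>\<Omega>. \<bar>f x\<bar> \<le> F"
    and frontier: "\<forall>x\<in>frontier \<Omega>. \<bar>u x\<bar> \<le> G"
  shows "\<forall>x\<in>closure \<Omega>. \<bar>u x\<bar> \<le> G + 2 * (F + 1) * ((W + 2)\<^sup>2 + 4 * (W + 2) + 1)"
proof -
  have "\<forall>x\<in>closure \<Omega>. u x \<le> G + 2 * (F + 1) * ((W + 2)\<^sup>2 + 4 * (W + 2) + 1)"
    using frontier by (intro upper_bound_of_eps_subsolution[OF assms(1-7) bounded
      eps_inf_lap_ge_if_abs_le[OF eq f]]) (auto simp: abs_le_iff)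
  moreover have "\<forall>x\<in>closure \<Omega>. - u x \<le> G + 2 * (F + 1) * ((W + 2)\<^sup>2 + 4 * (W + 2) + 1)"
  proof (rule upper_bound_of_eps_subsolution[OF assms(1-7)])
    have "(\<lambda>y. - u y) ` closure \<Omega> = uminus ` u ` closure \<Omega>" by (simp add: image_image)
    then show "bounded ((\<lambda>y. - u y) ` closure \<Omega>)" using bounded by simp
    have "\<forall>x\<in>\<Omega>. eps_inf_lap \<Omega> e (\<lambda>y. - u y) x = e\<^sup>2 * - f x"
      using eq by (simp add: eps_inf_lap_uminus)
    from eps_inf_lap_ge_if_abs_le[OF this] f
    show "\<forall>x\<in>\<Omega>. - (e\<^sup>2 * F) \<le> eps_inf_lap \<Omega> e (\<lambda>y. - u y) x" by simp
    show "\<forall>x\<in>frontier \<Omega>. - u x \<le> G" using frontier by (auto simp: abs_le_iff)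
  qed
  ultimately show ?thesis by (simp add: abs_le_iff)
qed

section \<open>Local Lipschitz estimate\<close>

lemma sum_ge_if_decrements_bounded:
  fixes D :: "nat \<Rightarrow> real"
  assumes "0 \<le> c" and step: "\<And>k. Suc k < n \<Longrightarrow> D k - c \<le> D (Suc k)"
  shows "real n * D 0 - (real n)\<^sup>2 * c \<le> (\<Sum>k<n. D k)"
proof -
  have D: "D 0 - real k * c \<le> D k" if "k < n" for k
    using that
  proof (induction k)
    case (Suc k)
    then have "D 0 - real k * c \<le> D k" "D k - c \<le> D (Suc k)" using step by auto
    then show ?case by (simp add: algebra_simps)
  qed simp
  have "real n * D 0 - (real n)\<^sup>2 * c = (\<Sum>k<n. D 0 - real n * c)"
    by (simp add: power2_eq_square algebra_simps)
  also have "\<dots> \<le> (\<Sum>k<n. D k)"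
  proof (rule sum_mono)
    fix k assume "k \<in> {..<n}"
    then have "real k * c \<le> real n * c" using assms(1) by (simp add: mult_right_mono)
    with D[of k] \<open>k \<in> {..<n}\<close> show "D 0 - real n * c \<le> D k" by simp
  qed
  finally show ?thesis .
qed

lemma iball_chain_near_sup:
  fixes u :: "'a::real_normed_vector \<Rightarrow> real"
  assumes "bounded (u ` closure \<Omega>)" "0 < e" "0 < \<eta>" "z \<in> closure \<Omega>"
  obtains X where "X 0 = z" "\<And>k. X (Suc k) \<in> iball \<Omega> (X k) e"
    "\<And>k. (SUP y\<in>iball \<Omega> (X k) e. u y) - \<eta> < u (X (Suc k))"
proof -
  have "\<forall>x\<in>closure \<Omega>. \<exists>y. y \<in> iball \<Omega> x e \<and> (SUP y\<in>iball \<Omega> x e. u y) - \<eta> < u y"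
  proof
    fix x assume "x \<in> closure \<Omega>"
    have ne: "iball \<Omega> x e \<noteq> {}" using centre_mem_iball[OF \<open>x \<in> closure \<Omega>\<close> assms(2)] by blast
    have bdd: "bdd_above (u ` iball \<Omega> x e)"
      by (rule bounded_imp_bdd_above[OF bounded_image_iball[OF assms(1)]])
    have "\<exists>y\<in>iball \<Omega> x e. (SUP y\<in>iball \<Omega> x e. u y) - \<eta> < u y"
      by (rule less_cSUP_iff[OF ne bdd, THEN iffD1]) (use assms(3) in simp)
    then show "\<exists>y. y \<in> iball \<Omega> x e \<and> (SUP y\<in>iball \<Omega> x e. u y) - \<eta> < u y" by blast
  qed
  then obtain next_pt where next_pt: "\<forall>x\<in>closure \<Omega>.
      next_pt x \<in> iball \<Omega> x e \<and> (SUP y\<in>iball \<Omega> x e. u y) - \<eta> < u (next_pt x)"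
    by metis
  define X where "X k = (next_pt ^^ k) z" for k
  have X_Suc: "X (Suc k) = next_pt (X k)" for k by (simp add: X_def)
  have X_closure: "X k \<in> closure \<Omega>" for k
  proof (induction k)
    case (Suc k)
    then have "X (Suc k) \<in> iball \<Omega> (X k) e" using next_pt X_Suc by simp
    then show ?case using iball_subset_closure by blast
  qed (simp add: X_def assms(4))
  show ?thesis
  proof (rule that)
    fix k
    show "X (Suc k) \<in> iball \<Omega> (X k) e" "(SUP y\<in>iball \<Omega> (X k) e. u y) - \<eta> < u (X (Suc k))"
      using next_pt X_closure[of k] X_Suc[of k] by auto
  qed (simp add: X_def)
qed

lemma eps_inf_lap_increment_decay:
  fixes u :: "'a::real_normed_vector \<Rightarrow> real"
  assumes "bounded (u ` closure \<Omega>)" "ball x e \<subseteq> \<Omega>" "dist p x < e"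
    and lap: "- c \<le> eps_inf_lap \<Omega> e u x" and q: "(SUP y\<in>iball \<Omega> x e. u y) - \<eta> < u q"
  shows "u x - u p - (c + \<eta>) \<le> u q - u x"
proof -
  have "p \<in> ball x e" using assms(3) by (simp add: dist_commute)
  then have "p \<in> iball \<Omega> x e" using ball_subset_iball[OF assms(2)] by blast
  with bounded_imp_bdd_below[OF bounded_image_iball[OF assms(1)]]
  have "(INF y\<in>iball \<Omega> x e. u y) \<le> u p" by (rule cINF_lower)
  with lap q show ?thesis unfolding eps_inf_lap_def by linarith
qed

lemma eps_solution_chain_estimate:
  fixes u :: "'a::real_normed_vector \<Rightarrow> real"
  assumes "0 < e" "real n * e + e \<le> R"
    and bound: "\<forall>x\<in>closure \<Omega>. \<bar>u x\<bar> \<le> M"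
    and eq: "\<forall>x\<in>\<Omega>. eps_inf_lap \<Omega> e u x = e\<^sup>2 * f x" and f: "\<forall>x\<in>\<Omega>. \<bar>f x\<bar> \<le> F"
    and ball: "ball z R \<subseteq> \<Omega>"
  shows "real n * ((SUP y\<in>iball \<Omega> z e. u y) - u z - e\<^sup>2) - (real n)\<^sup>2 * (e\<^sup>2 * (F + 1)) \<le> 2 * M"
proof -
  have "0 \<le> real n * e" using assms(1) by simp
  then have "0 < R" using assms(1,2) by linarith
  then have "z \<in> \<Omega>" using ball by auto
  then have "z \<in> closure \<Omega>" using closure_subset[of \<Omega>] by blast
  have bounded: "bounded (u ` closure \<Omega>)"
    using bound by (intro bounded_real[THEN iffD2]) blast
  obtain X where X: "X 0 = z" "\<And>k. X (Suc k) \<in> iball \<Omega> (X k) e"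
    "\<And>k. (SUP y\<in>iball \<Omega> (X k) e. u y) - e\<^sup>2 < u (X (Suc k))"
    using iball_chain_near_sup[OF bounded assms(1) _ \<open>z \<in> closure \<Omega>\<close>, of "e\<^sup>2"] assms(1) by auto
  have X_closure: "X k \<in> closure \<Omega>" for k
  proof (cases k)
    case (Suc j)
    then show ?thesis using X(2)[of j] iball_subset_closure by blast
  qed (simp add: X(1) \<open>z \<in> closure \<Omega>\<close>)
  have dist_step: "dist (X k) (X (Suc k)) < e" for k
    using X(2) by (rule dist_less_if_mem_iball)
  have dist_X: "dist z (X k) \<le> real k * e" for k
  proof (induction k)
    case (Suc k)
    then show ?case using dist_triangle[of z "X (Suc k)" "X k"] dist_step[of k] by (simp add: algebra_simps)
  qed (simp add: X(1))
  have deep: "ball (X k) e \<subseteq> \<Omega>" if "k \<le> n" for k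
  proof -
    have "real k * e \<le> real n * e" using that assms(1) by (simp add: mult_right_mono)
    have "ball (X k) e \<subseteq> ball z R"
    proof
      fix y assume "y \<in> ball (X k) e"
      then have "dist z y < real n * e + e"
        using dist_X[of k] \<open>real k * e \<le> real n * e\<close> dist_triangle[of z y "X k"] by simp
      with assms(2) show "y \<in> ball z R" by simp
    qed
    with ball show ?thesis by blast
  qed
  define D where "D k = u (X (Suc k)) - u (X k)" for k
  have "D k - e\<^sup>2 * (F + 1) \<le> D (Suc k)" if "Suc k < n" for k
  proof -
    have "ball (X (Suc k)) e \<subseteq> \<Omega>" using deep that by simp
    moreover from this have "X (Suc k) \<in> \<Omega>" using assms(1) by auto
    then have "- (e\<^sup>2 * F) \<le> eps_inf_lap \<Omega> e u (X (Suc k))"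
      using eps_inf_lap_ge_if_abs_le[OF eq f] by blast
    ultimately show ?thesis
      using eps_inf_lap_increment_decay[where c = "e\<^sup>2 * F", OF bounded _ dist_step _ X(3)]
      by (simp add: D_def algebra_simps)
  qed
  then have "real n * D 0 - (real n)\<^sup>2 * (e\<^sup>2 * (F + 1)) \<le> (\<Sum>k<n. D k)"
    by (intro sum_ge_if_decrements_bounded) (use f \<open>z \<in> \<Omega>\<close> in force)+
  also have "\<dots> = u (X n) - u z"
    using sum_lessThan_telescope[of "\<lambda>k. u (X k)" n] X(1) by (simp add: D_def)
  also have "\<dots> \<le> 2 * M"
  proof -
    have "\<bar>u (X n)\<bar> \<le> M" "\<bar>u z\<bar> \<le> M" using bound X_closure[of n] \<open>z \<in> closure \<Omega>\<close> by blast+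
    then show ?thesis by linarith
  qed
  finally have "real n * D 0 - (real n)\<^sup>2 * (e\<^sup>2 * (F + 1)) \<le> 2 * M" .
  moreover have "(SUP y\<in>iball \<Omega> z e. u y) - u z - e\<^sup>2 \<le> D 0"
    using X(3)[of 0] X(1) by (simp add: D_def)
  then have "real n * ((SUP y\<in>iball \<Omega> z e. u y) - u z - e\<^sup>2) \<le> real n * D 0"
    by (rule mult_left_mono) simp
  ultimately show ?thesis by linarith
qed

lemma sup_iball_minus_le:
  fixes u :: "'a::real_normed_vector \<Rightarrow> real"
  assumes "0 < e" "e \<le> 1" "4 * e \<le> R"
    and bound: "\<forall>x\<in>closure \<Omega>. \<bar>u x\<bar> \<le> M"
    and eq: "\<forall>x\<in>\<Omega>. eps_inf_lap \<Omega> e u x = e\<^sup>2 * f x" and f: "\<forall>x\<in>\<Omega>. \<bar>f x\<bar> \<le> F"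
    and ball: "ball z R \<subseteq> \<Omega>"
  shows "(SUP y\<in>iball \<Omega> z e. u y) - u z \<le> e * (8 * M / R + 1 + R * (F + 1) / 2)"
proof -
  define S where "S = (SUP y\<in>iball \<Omega> z e. u y) - u z"
  define n where "n = nat \<lfloor>R / (2 * e)\<rfloor>"
  have "2 \<le> R / (2 * e)" using assms(1,3) by (simp add: field_simps)
  then have n: "R / (2 * e) - 1 < real n" "real n \<le> R / (2 * e)" by (auto simp: n_def)
  have "0 < R" using assms(1,3) by linarith
  have "R / (4 * e) \<le> real n" using n(1) \<open>2 \<le> R / (2 * e)\<close> by (simp add: field_simps)
  have "real n * e \<le> R / 2" using n(2) assms(1) by (simp add: field_simps)
  have "0 < real n" using n(1) \<open>2 \<le> R / (2 * e)\<close> by linarith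
  have "z \<in> \<Omega>" using ball \<open>0 < R\<close> by auto
  then have "0 \<le> M" "0 \<le> F" using bound f closure_subset[of \<Omega>] by force+
  have "real n * (S - e\<^sup>2) - (real n)\<^sup>2 * (e\<^sup>2 * (F + 1)) \<le> 2 * M"
    unfolding S_def using \<open>real n * e \<le> R / 2\<close> assms(3)
    by (intro eps_solution_chain_estimate[OF assms(1) _ bound eq f ball]) (use assms(1) in linarith)
  then have "S \<le> 2 * M / real n + e\<^sup>2 + real n * (e\<^sup>2 * (F + 1))"
    using \<open>0 < real n\<close> by (simp add: field_simps power2_eq_square)
  moreover have "2 * M / real n \<le> 8 * M * e / R"
  proof -
    have "2 * M / real n \<le> 2 * M / (R / (4 * e))"
      using \<open>0 \<le> M\<close> \<open>R / (4 * e) \<le> real n\<close> \<open>0 < R\<close> \<open>0 < real n\<close> assms(1)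
      by (intro divide_left_mono) auto
    then show ?thesis using assms(1) by (simp add: field_simps)
  qed
  moreover have "e\<^sup>2 \<le> e" using assms(1,2) by (simp add: power2_eq_square mult_left_le)
  moreover have "real n * (e\<^sup>2 * (F + 1)) \<le> R / 2 * (e * (F + 1))"
  proof -
    have "real n * (e\<^sup>2 * (F + 1)) = (real n * e) * (e * (F + 1))"
      by (simp add: power2_eq_square algebra_simps)
    also have "\<dots> \<le> R / 2 * (e * (F + 1))"
      using \<open>real n * e \<le> R / 2\<close> assms(1) \<open>0 \<le> F\<close> by (intro mult_right_mono) auto
    finally show ?thesis .
  qed
  moreover have "e * (8 * M / R + 1 + R * (F + 1) / 2) = 8 * M * e / R + e + R / 2 * (e * (F + 1))"
    by (simp add: algebra_simps)
  ultimately show ?thesis unfolding S_def by linarith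
qed

lemma eps_solution_local_lipschitz:
  fixes u :: "'a::real_normed_vector \<Rightarrow> real"
  assumes "0 < e" "e \<le> 1" "4 * e \<le> R"
    and bound: "\<forall>x\<in>closure \<Omega>. \<bar>u x\<bar> \<le> M"
    and eq: "\<forall>x\<in>\<Omega>. eps_inf_lap \<Omega> e u x = e\<^sup>2 * f x" and f: "\<forall>x\<in>\<Omega>. \<bar>f x\<bar> \<le> F"
    and ball: "ball z R \<subseteq> \<Omega>" and "dist z w < e"
  shows "\<bar>u w - u z\<bar> \<le> e * (8 * M / R + 1 + R * (F + 1) / 2)"
proof -
  have "e \<le> R" using assms(1,3) by linarith
  then have "ball z e \<subseteq> \<Omega>" using ball subset_ball[of e R z] by blast
  moreover have "w \<in> ball z e" using \<open>dist z w < e\<close> by simp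
  ultimately have w: "w \<in> iball \<Omega> z e" using ball_subset_iball by blast
  have bounded: "bounded (u ` closure \<Omega>)" "bounded ((\<lambda>y. - u y) ` closure \<Omega>)"
    using bound by (simp_all add: bounded_real) blast+
  have "u w \<le> (SUP y\<in>iball \<Omega> z e. u y)"
    using bounded_imp_bdd_above[OF bounded_image_iball[OF bounded(1)]] w by (rule cSUP_upper2) simp
  moreover have "- u w \<le> (SUP y\<in>iball \<Omega> z e. - u y)"
    using bounded_imp_bdd_above[OF bounded_image_iball[OF bounded(2)]] w by (rule cSUP_upper2) simp
  moreover have "(SUP y\<in>iball \<Omega> z e. u y) - u z \<le> e * (8 * M / R + 1 + R * (F + 1) / 2)"
    by (rule sup_iball_minus_le[OF assms(1-3) bound eq f ball])
  moreover have "(SUP y\<in>iball \<Omega> z e. - u y) - - u z \<le> e * (8 * M / R + 1 + R * (F + 1) / 2)"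
  proof (rule sup_iball_minus_le[OF assms(1-3) _ _ _ ball])
    show "\<forall>x\<in>closure \<Omega>. \<bar>- u x\<bar> \<le> M" using bound by simp
    show "\<forall>x\<in>\<Omega>. eps_inf_lap \<Omega> e (\<lambda>y. - u y) x = e\<^sup>2 * - f x"
      using eq by (simp add: eps_inf_lap_uminus)
    show "\<forall>x\<in>\<Omega>. \<bar>- f x\<bar> \<le> F" using f by simp
  qed
  ultimately show ?thesis by linarith
qed

lemma abs_diff_le_by_segment_steps:
  fixes u :: "'a::real_normed_vector \<Rightarrow> real"
  assumes "0 < e"
    and step: "\<And>a b. a \<in> closed_segment x y \<Longrightarrow> b \<in> closed_segment x y \<Longrightarrow> dist a b < e
      \<Longrightarrow> \<bar>u b - u a\<bar> \<le> K"
  shows "\<bar>u x - u y\<bar> \<le> (dist x y / e + 1) * K"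
proof -
  have "0 \<le> K" using step[of x x] assms(1) by simp
  define m where "m = nat \<lfloor>dist x y / e\<rfloor> + 1"
  have "0 \<le> dist x y / e" using assms(1) by simp
  then have "real m = of_int \<lfloor>dist x y / e\<rfloor> + 1" by (simp add: m_def)
  then have m: "dist x y / e < real m" "real m \<le> dist x y / e + 1" "0 < real m"
    using floor_correct[of "dist x y / e"] \<open>0 \<le> dist x y / e\<close> by linarith+
  define p where "p j = x + (real j / real m) *\<^sub>R (y - x)" for j
  have p_segment: "p j \<in> closed_segment x y" if "j \<le> m" for j
    unfolding p_def in_segment using that m(3)
    by (intro exI[of _ "real j / real m"]) (auto simp: algebra_simps)
  have "p (Suc j) - p j = (1 / real m) *\<^sub>R (y - x)" for j
    by (simp add: p_def add_divide_distrib scaleR_add_left)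
  have p_step: "dist (p j) (p (Suc j)) < e" for j
  proof -
    have "dist (p j) (p (Suc j)) = norm (p (Suc j) - p j)"
      by (simp add: dist_norm norm_minus_commute)
    also have "\<dots> = norm ((1 / real m) *\<^sub>R (y - x))"
      using \<open>p (Suc j) - p j = (1 / real m) *\<^sub>R (y - x)\<close> by (rule arg_cong)
    also have "\<dots> = dist x y / real m" by (simp add: dist_norm norm_minus_commute[of y x])
    also have "\<dots> < e" using m(1,3) assms(1) by (simp add: field_simps)
    finally show ?thesis .
  qed
  have "\<bar>u y - u x\<bar> = \<bar>\<Sum>j<m. u (p (Suc j)) - u (p j)\<bar>"
    using sum_lessThan_telescope[of "\<lambda>j. u (p j)" m] m(3) by (simp add: p_def)
  also have "\<dots> \<le> (\<Sum>j<m. \<bar>u (p (Suc j)) - u (p j)\<bar>)" by (rule sum_abs)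
  also have "\<dots> \<le> (\<Sum>j<m. K)"
    using p_segment p_step by (intro sum_mono step) simp_all
  also have "\<dots> \<le> (dist x y / e + 1) * K" using m(2) \<open>0 \<le> K\<close> by (simp add: mult_right_mono)
  finally show ?thesis by (simp add: abs_minus_commute)
qed

section \<open>Equicontinuity on inner sets\<close>

lemma eps_solution_lipschitz_on_inner_set:
  fixes \<Omega> :: "'a::euclidean_space set" and u :: "'a \<Rightarrow> real"
  assumes "open \<Omega>" "frontier \<Omega> \<noteq> {}" "0 < e" "e \<le> 1" "8 * e \<le> r"
    and bound: "\<forall>x\<in>closure \<Omega>. \<bar>u x\<bar> \<le> M"
    and eq: "\<forall>x\<in>\<Omega>. eps_inf_lap \<Omega> e u x = e\<^sup>2 * f x" and f: "\<forall>x\<in>\<Omega>. \<bar>f x\<bar> \<le> F"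
    and x: "x \<in> inner_set \<Omega> r" and y: "y \<in> inner_set \<Omega> r"
    and "dist x y < \<delta>" "e < \<delta>"
  shows "\<bar>u x - u y\<bar> \<le> 2 * (16 * M / r + 1 + r * (F + 1) / 4) * \<delta>"
proof -
  define L where "L = 16 * M / r + 1 + r * (F + 1) / 4"
  have "x \<in> \<Omega>" "y \<in> \<Omega>" using x y by (auto simp: inner_set_def)
  then have "\<bar>u x\<bar> \<le> M" "\<bar>u y\<bar> \<le> M" "\<bar>f x\<bar> \<le> F"
    using bound f closure_subset[of \<Omega>] by blast+
  have "0 < r" using assms(3,5) by linarith
  have "16 * M / r \<le> L" using \<open>\<bar>f x\<bar> \<le> F\<close> \<open>0 < r\<close> by (simp add: L_def)
  moreover have "0 \<le> 16 * M / r" using \<open>\<bar>u x\<bar> \<le> M\<close> \<open>0 < r\<close> by simp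
  ultimately have "0 \<le> L" by linarith
  show ?thesis
  proof (cases "r / 4 \<le> \<delta>")
    case True
    have "\<bar>u x - u y\<bar> \<le> 2 * M" using \<open>\<bar>u x\<bar> \<le> M\<close> \<open>\<bar>u y\<bar> \<le> M\<close> by linarith
    also have "\<dots> = (8 * M / r) * (r / 4)" using \<open>0 < r\<close> by simp
    also have "\<dots> \<le> (2 * L) * \<delta>"
      using True \<open>16 * M / r \<le> L\<close> \<open>0 \<le> L\<close> \<open>0 < r\<close> by (intro mult_mono) auto
    finally show ?thesis by (simp add: L_def)
  next
    case False
    have "\<bar>u b - u a\<bar> \<le> e * L"
      if "a \<in> closed_segment x y" "dist a b < e" for a b
    proof -
      have "dist x a \<le> dist x y"
        using dist_in_closed_segment[OF that(1)] by (simp add: dist_commute)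
      then have "ball a (r / 2) \<subseteq> ball x r"
        using \<open>dist x y < \<delta>\<close> False unfolding ball_subset_ball_iff dist_commute[of a]
        by linarith
      then have "ball a (r / 2) \<subseteq> \<Omega>"
        using ball_subset_if_mem_inner_set[OF assms(1,2) x] by blast
      from eps_solution_local_lipschitz[OF assms(3,4) _ bound eq f this that(2)] assms(5)
      show ?thesis by (simp add: L_def)
    qed
    then have "\<bar>u x - u y\<bar> \<le> (dist x y / e + 1) * (e * L)"
      using assms(3) by (intro abs_diff_le_by_segment_steps) auto
    also have "\<dots> = (dist x y + e) * L" using assms(3) by (simp add: field_simps)
    also have "\<dots> \<le> (2 * \<delta>) * L"
      by (rule mult_right_mono) (use \<open>dist x y < \<delta>\<close> \<open>e < \<delta>\<close> \<open>0 \<le> L\<close> in linarith)+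
    also have "\<dots> = 2 * L * \<delta>" by simp
    finally show ?thesis by (simp add: L_def)
  qed
qed

lemma abs_le_SUP_abs:
  fixes f :: "'a \<Rightarrow> real"
  assumes "bounded (f ` S)" "x \<in> S"
  shows "\<bar>f x\<bar> \<le> (SUP z\<in>S. \<bar>f z\<bar>)"
proof (rule cSUP_upper[OF assms(2)])
  obtain a where "\<forall>z\<in>S. \<bar>f z\<bar> \<le> a" using assms(1) by (auto simp: bounded_real)
  then show "bdd_above ((\<lambda>z. \<bar>f z\<bar>) ` S)" by (meson bdd_aboveI2)
qed

definition inner_lipschitz_const :: "real \<Rightarrow> real \<Rightarrow> real \<Rightarrow> real \<Rightarrow> real" where
  "inner_lipschitz_const W r G F =
     2 * (16 * (G + 2 * (F + 1) * ((W + 2)\<^sup>2 + 4 * (W + 2) + 1)) / r + 1 + r * (F + 1) / 4)"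

lemma eps_solutions_eventually_lipschitz_on_inner_set:
  fixes \<Omega> :: "'a::euclidean_space set" and u :: "nat \<Rightarrow> 'a \<Rightarrow> real"
  assumes "open \<Omega>" "\<Omega> \<noteq> {}" "frontier \<Omega> \<noteq> {}" "0 \<le> W"
    and width: "\<forall>x\<in>\<Omega>. infdist x (frontier \<Omega>) \<le> W" and "0 < r" "0 < \<delta>"
    and f: "bounded (f ` \<Omega>)" and g: "bounded (g ` frontier \<Omega>)"
    and eps: "\<And>i. 0 < eps i" "eps \<longlonglongrightarrow> 0"
    and bounded: "\<And>i. bounded (u i ` closure \<Omega>)"
    and eq: "\<And>i. \<forall>x\<in>\<Omega>. eps_inf_lap \<Omega> (eps i) (u i) x = (eps i)\<^sup>2 * f x"
    and boundary: "\<And>i. \<forall>x\<in>frontier \<Omega>. u i x = g x"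
  shows "\<exists>N. \<forall>i>N. \<forall>x\<in>inner_set \<Omega> r. \<forall>y\<in>inner_set \<Omega> r. dOm \<Omega> x y < ereal \<delta> \<longrightarrow>
    \<bar>u i x - u i y\<bar> \<le> inner_lipschitz_const W r (SUP z\<in>frontier \<Omega>. \<bar>g z\<bar>) (SUP z\<in>\<Omega>. \<bar>f z\<bar>) * \<delta>"
proof -
  define G where "G = (SUP z\<in>frontier \<Omega>. \<bar>g z\<bar>)"
  define F where "F = (SUP z\<in>\<Omega>. \<bar>f z\<bar>)"
  define M where "M = G + 2 * (F + 1) * ((W + 2)\<^sup>2 + 4 * (W + 2) + 1)"
  have F: "\<forall>x\<in>\<Omega>. \<bar>f x\<bar> \<le> F" using abs_le_SUP_abs[OF f] by (simp add: F_def)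
  moreover obtain x0 where "x0 \<in> \<Omega>" using assms(2) by blast
  ultimately have "0 \<le> F" by (meson abs_ge_zero order_trans)
  have "\<forall>x\<in>frontier \<Omega>. \<bar>u i x\<bar> \<le> G" for i
    using abs_le_SUP_abs[OF g] boundary by (simp add: G_def)
  then have M: "\<forall>x\<in>closure \<Omega>. \<bar>u i x\<bar> \<le> M" if "eps i \<le> 1" for i
    unfolding M_def by (rule abs_bound_of_eps_solution[OF assms(1,3) eps(1) that assms(4) \<open>0 \<le> F\<close>
      width bounded eq F])
  have "\<forall>\<^sub>F i in sequentially. eps i < min 1 (min (r / 8) \<delta>)"
    using assms(6,7) by (intro order_tendstoD(2)[OF eps(2)]) simp
  then obtain N where N: "\<And>i. N \<le> i \<Longrightarrow> eps i < min 1 (min (r / 8) \<delta>)"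
    unfolding eventually_sequentially by blast
  have "\<bar>u i x - u i y\<bar> \<le> inner_lipschitz_const W r G F * \<delta>"
    if "N < i" "x \<in> inner_set \<Omega> r" "y \<in> inner_set \<Omega> r" "dOm \<Omega> x y < ereal \<delta>" for i x y
  proof -
    have "eps i \<le> 1" "8 * eps i \<le> r" "eps i < \<delta>" using N[of i] \<open>N < i\<close> by auto
    moreover have "ereal (dist x y) < ereal \<delta>"
      using dist_le_dOm[of x y \<Omega>] that(4) by (rule le_less_trans)
    ultimately show ?thesis
      using eps_solution_lipschitz_on_inner_set[OF assms(1,3) eps(1) _ _ M eq F that(2,3)]
      by (simp add: inner_lipschitz_const_def M_def)
  qed
  then show ?thesis unfolding G_def[symmetric] F_def[symmetric] by blast
qed

theorem corollary5p3:
  fixes \<Omega> :: "'a::euclidean_space set" and r :: real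
  assumes "open \<Omega>" and "connected \<Omega>" and "\<Omega> \<noteq> {}"
    and "width \<Omega> < \<infinity>"
    and "r > 0"
  shows "\<exists>C :: real \<Rightarrow> real \<Rightarrow> real. \<forall>(f :: 'a \<Rightarrow> real) (g :: 'a \<Rightarrow> real)
            (eps :: nat \<Rightarrow> real) (u :: nat \<Rightarrow> 'a \<Rightarrow> real).
     (f \<in> borel_measurable (lebesgue_on \<Omega>) \<and> bounded (f ` \<Omega>) \<and>
      continuous_on (frontier \<Omega>) g \<and> bounded (g ` frontier \<Omega>) \<and>
      (\<forall>i. eps i > 0) \<and> eps \<longlonglongrightarrow> 0 \<and>
      (\<forall>i. bounded (u i ` closure \<Omega>)) \<and>
      (\<forall>i. \<forall>x\<in>\<Omega>. eps_inf_lap \<Omega> (eps i) (u i) x = (eps i)\<^sup>2 * f x) \<and>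
      (\<forall>i. \<forall>x\<in>frontier \<Omega>. u i x = g x))
     \<longrightarrow> (\<forall>\<delta>>0. \<exists>N::nat. \<forall>i>N. \<forall>x\<in>inner_set \<Omega> r. \<forall>y\<in>inner_set \<Omega> r.
            dOm \<Omega> x y < ereal \<delta> \<longrightarrow>
            \<bar>u i x - u i y\<bar> \<le> C (SUP z\<in>frontier \<Omega>. \<bar>g z\<bar>) (SUP z\<in>\<Omega>. \<bar>f z\<bar>) * \<delta>)"
proof -
  have "frontier \<Omega> \<noteq> {}" using frontier_nonempty_if_width_finite assms(3,4) by blast
  obtain W where "0 \<le> W" "\<forall>x\<in>\<Omega>. infdist x (frontier \<Omega>) \<le> W"
    using infdist_frontier_bounded_if_width_finite[OF assms(4)] by blast
  note lipschitz = eps_solutions_eventually_lipschitz_on_inner_set[OF assms(1,3) \<open>frontier \<Omega> \<noteq> {}\<close>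
    \<open>0 \<le> W\<close> \<open>\<forall>x\<in>\<Omega>. infdist x (frontier \<Omega>) \<le> W\<close> assms(5)]
  show ?thesis
    by (intro exI[of _ "inner_lipschitz_const W r"] allI impI; elim conjE; intro allI impI lipschitz)
      auto
qed

end
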